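(* Let $x\in\mathcal X$, $\mathbb P\in\mathcal P^o$, and let $K=2\sup_{x'\in\mathcal X}\max_{i\in\Sigma}|\ell(x',i)|$. For all $T\in\mathbb N$, $$\mathbb P^\infty\Big(c(x,\mathbb P)\le\hat c_{\mathrm V}(x,\hat{\mathbb P}_T,T)+\tfrac{7K}{3}\tfrac{a_T}{T}\Big)\ge1-2e^{-a_T},$$ $$\mathbb P^\infty\Big(c(x,\mathbb P)\ge\hat c_{\mathrm V}(x,\hat{\mathbb P}_T,T)-\sqrt{\tfrac{8a_T}{T}\mathrm{Var}_{\mathbb P}(\ell(x,\xi))}-\tfrac{7K}{3}\tfrac{a_T}{T}\Big)\ge1-2e^{-a_T}.$$
   Context: $\Sigma=\{1,\dots,d\}$ is finite, $\mathcal P$ the probability simplex, $\mathcal P^o$ its relative interior. $\mathcal X\subset\mathbb R^n$ is compact, $\ell:\mathcal X\times\Sigma\to\mathbb R$ continuous in $x$. $c(x,\mathbb P)=\sum_i\ell(x,i)\mathbb P(i)$, $\mathrm{Var}_{\mathbb P}(\ell(x,\xi))=\sum_i\mathbb P(i)(\ell(x,i)-c(x,\mathbb P))^2$. Data $\xi_1,\xi_2,\dots$ are i.i.d. with law $\mathbb P$, $\mathbb P^\infty$ their joint law, $\hat{\mathbb P}_T(i)=\frac1T\sum_{t\le T}\mathbf 1\{\xi_t=i\}$. $(a_T)$ is a sequence of positive reals. SVP predictor: $\hat c_{\mathrm V}(x,\mathbb Q,T)=c(x,\mathbb Q)+\sqrt{\frac{2a_T}{T}\mathrm{Var}_{\mathbb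 Q}(\ell(x,\xi))}$ for $\mathbb Q\in\mathcal P$. *)

theory Defs
  imports "HOL-Probability.Probability"
begin

text \<open>Sigma is modelled as a finite type 's; a distribution Q on Sigma as a function 's => real.\<close>

definition cost :: "('x \<Rightarrow> 's::finite \<Rightarrow> real) \<Rightarrow> 'x \<Rightarrow> ('s \<Rightarrow> real) \<Rightarrow> real" where
  "cost L x Q = (\<Sum>i\<in>UNIV. L x i * Q i)"

definition var :: "('x \<Rightarrow> 's::finite \<Rightarrow> real) \<Rightarrow> 'x \<Rightarrow> ('s \<Rightarrow> real) \<Rightarrow> real" where
  "var L x Q = (\<Sum>i\<in>UNIV. Q i * (L x i - cost L x Q)\<^sup>2)"

text \<open>Empirical distribution of xi_1, ..., xi_T (coordinate 0 of the sample path is unused).\<close>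
definition emp :: "nat \<Rightarrow> (nat \<Rightarrow> 's) \<Rightarrow> 's \<Rightarrow> real" where
  "emp T \<omega> i = real (card {t\<in>{1..T}. \<omega> t = i}) / real T"

definition svp :: "(nat \<Rightarrow> real) \<Rightarrow> ('x \<Rightarrow> 's::finite \<Rightarrow> real) \<Rightarrow> 'x \<Rightarrow> ('s \<Rightarrow> real) \<Rightarrow> nat \<Rightarrow> real" where
  "svp a L x Q T = cost L x Q + sqrt (2 * a T / real T * var L x Q)"

definition Pinf :: "'s pmf \<Rightarrow> (nat \<Rightarrow> 's) measure" where
  "Pinf P = PiM UNIV (\<lambda>_::nat. measure_pmf P)"

end

theory Submission
  imports Defs
begin

text \<open>
  Write l = L x, c for its mean and s^2 for its variance under P. Both bounds follow from Bernstein's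
  inequality for the sample means of two centred functions of the loss: the deviation l - c and the
  squared deviation (l - c)^2 - s^2. Since l ranges in an interval of length K, the Bhatia-Davis
  inequality gives s^2 <= K^2/4 - c^2, and bounding the third central moment by Cauchy-Schwarz gives
  Var((l - c)^2) <= s^2 (K^2 - 4 s^2). Off the two exceptional events, each of probability at most
  exp(-a), the empirical mean and the empirical second moment about c are within Bernstein distance
  of c and s^2; an elementary inequality in r = sqrt(2a/T) turns these two controls into the stated
  bounds on the SVP predictor.
\<close>

lemma exp_mult_le_quadratic:
  fixes x :: real
  shows "exp x * (6 - 2 * x) \<le> x\<^sup>2 + 4 * x + 6"
proof -
  define h where "h = (\<lambda>x::real. x\<^sup>2 + 4 * x + 6 - exp x * (6 - 2 * x))"
  define h1 where "h1 = (\<lambda>x::real. 2 * x + 4 - exp x * (4 - 2 * x))"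
  define h2 where "h2 = (\<lambda>x::real. 2 - exp x * (2 - 2 * x))"
  \<comment> \<open>\<open>h\<close>, \<open>h' = h1\<close> and \<open>h'' = h2\<close> vanish at 0, and \<open>h2' = 2 y e\<^sup>y\<close> has the sign of \<open>y\<close>.\<close>
  have d0: "(h has_real_derivative h1 y) (at y)" for y
    unfolding h_def h1_def by (auto intro!: derivative_eq_intros simp: algebra_simps)
  have d1: "(h1 has_real_derivative h2 y) (at y)" for y
    unfolding h1_def h2_def by (auto intro!: derivative_eq_intros simp: algebra_simps)
  have d2: "(h2 has_real_derivative (2 * y * exp y)) (at y)" for y
    unfolding h2_def by (auto intro!: derivative_eq_intros simp: algebra_simps)
  have h2_nonneg: "h2 y \<ge> 0" for y
  proof -
    have "h2 0 \<le> h2 y"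
    proof (cases "y \<ge> 0")
      case True
      show ?thesis
        by (rule DERIV_nonneg_imp_nondecreasing[OF True]) (use d2 in \<open>auto intro!: exI\<close>)
    next
      case False
      show ?thesis
        by (rule DERIV_nonpos_imp_nonincreasing[of y 0])
          (use False d2 in \<open>auto intro!: exI simp: mult_nonpos_nonneg\<close>)
    qed
    then show ?thesis
      by (simp add: h2_def)
  qed
  have h1_sign: "(y \<ge> 0 \<longrightarrow> h1 y \<ge> 0) \<and> (y \<le> 0 \<longrightarrow> h1 y \<le> 0)" for y
  proof -
    have mono: "h1 u \<le> h1 v" if "u \<le> v" for u v
      using that by (rule DERIV_nonneg_imp_nondecreasing[of u v h1]) (meson d1 h2_nonneg)
    show ?thesis
      using mono[of 0 y] mono[of y 0] by (auto simp: h1_def)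
  qed
  have "h 0 \<le> h x"
  proof (cases "x \<ge> 0")
    case True
    show ?thesis
      by (rule DERIV_nonneg_imp_nondecreasing[OF True]) (meson d0 h1_sign)
  next
    case False
    show ?thesis
      by (rule DERIV_nonpos_imp_nonincreasing[of x 0]) (use False d0 h1_sign in auto)
  qed
  then show ?thesis
    by (simp add: h_def)
qed

lemma exp_le_one_plus_quadratic:
  fixes x y :: real
  assumes "x \<le> y" "y < 3"
  shows "exp x \<le> 1 + x + x\<^sup>2 * 3 / (6 - 2 * y)"
proof -
  have pos: "6 - 2 * x > 0"
    using assms by simp
  have "exp x \<le> (x\<^sup>2 + 4 * x + 6) / (6 - 2 * x)"
    using exp_mult_le_quadratic[of x] pos by (simp add: pos_le_divide_eq)
  also have "\<dots> = 1 + x + x\<^sup>2 * 3 / (6 - 2 * x)"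
    using pos by (simp add: field_simps power2_eq_square)
  also have "x\<^sup>2 * 3 / (6 - 2 * x) \<le> x\<^sup>2 * 3 / (6 - 2 * y)"
    using assms by (intro divide_left_mono) auto
  finally show ?thesis
    by simp
qed

lemma weighted_sum_exp_le:
  fixes p f :: "'s::finite \<Rightarrow> real"
  assumes p0: "\<And>i. p i \<ge> 0" and p1: "sum p UNIV = 1" and mean: "(\<Sum>i\<in>UNIV. p i * f i) = 0"
    and fb: "\<And>i. f i \<le> b" and fv: "(\<Sum>i\<in>UNIV. p i * (f i)\<^sup>2) \<le> v"
    and l0: "0 \<le> l" and lb: "l * b < 3"
  shows "(\<Sum>i\<in>UNIV. p i * exp (l * f i)) \<le> exp (l\<^sup>2 * v * 3 / (6 - 2 * (l * b)))"
proof -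
  define D where "D = 3 / (6 - 2 * (l * b))"
  have D0: "D \<ge> 0"
    using lb by (simp add: D_def mult.commute)
  have pointwise: "exp (l * f i) \<le> 1 + l * f i + l\<^sup>2 * (f i)\<^sup>2 * D" for i
    using exp_le_one_plus_quadratic[OF mult_left_mono[OF fb l0] lb]
    by (simp add: D_def power_mult_distrib)
  have "(\<Sum>i\<in>UNIV. p i * exp (l * f i)) \<le> (\<Sum>i\<in>UNIV. p i * (1 + l * f i + l\<^sup>2 * (f i)\<^sup>2 * D))"
    by (intro sum_mono mult_left_mono pointwise p0)
  also have "\<dots> = sum p UNIV + l * (\<Sum>i\<in>UNIV. p i * f i) + l\<^sup>2 * D * (\<Sum>i\<in>UNIV. p i * (f i)\<^sup>2)"
    by (simp add: algebra_simps sum.distrib sum_distrib_left)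
  also have "\<dots> \<le> 1 + l\<^sup>2 * D * v"
    using p1 mean fv D0 by (simp add: mult_left_mono)
  also have "\<dots> \<le> exp (l\<^sup>2 * D * v)"
    by (rule exp_ge_add_one_self)
  finally show ?thesis
    by (simp add: D_def mult.commute mult.left_commute)
qed

abbreviation iid_sample :: "nat set \<Rightarrow> 's pmf \<Rightarrow> (nat \<Rightarrow> 's) measure" where
  "iid_sample J P \<equiv> PiM J (\<lambda>_. measure_pmf P)"

lemma space_iid_sample: "space (iid_sample J P) = PiE J (\<lambda>_. UNIV)"
  by (simp add: space_PiM)

lemma prob_space_iid_sample: "prob_space (iid_sample J P)"
  by (intro prob_space_PiM measure_pmf.prob_space_axioms)

lemma sets_iid_sample:
  fixes P :: "'s::finite pmf"
  assumes J: "finite J"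
  shows "sets (iid_sample J P) = Pow (space (iid_sample J P))"
proof (intro equalityI subsetI)
  fix S
  assume "S \<in> sets (iid_sample J P)"
  then show "S \<in> Pow (space (iid_sample J P))"
    using sets.sets_into_space by blast
next
  fix S
  assume "S \<in> Pow (space (iid_sample J P))"
  then have S: "S \<subseteq> PiE J (\<lambda>_. UNIV)"
    by (simp add: space_iid_sample)
  have "finite S"
    using S J by (rule finite_subset[OF _ finite_PiE]) auto
  have "PiE J (\<lambda>t. {h t}) = {h}" if "h \<in> S" for h
    using S that by (intro PiE_singleton) (auto simp: PiE_def)
  then have "S = (\<Union>h\<in>S. PiE J (\<lambda>t. {h t}))"
    by auto
  also have "\<dots> \<in> sets (iid_sample J P)"
    using \<open>finite S\<close> J by (intro sets.finite_UN sets_PiM_I_finite) auto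
  finally show "S \<in> sets (iid_sample J P)" .
qed

lemma integrable_iid_sample:
  fixes P :: "'s::finite pmf" and g :: "(nat \<Rightarrow> 's) \<Rightarrow> real"
  assumes J: "finite J"
  shows "integrable (iid_sample J P) g"
proof -
  interpret prob_space "iid_sample J P"
    by (rule prob_space_iid_sample)
  have finite_space: "finite (space (iid_sample J P))"
    using J by (simp add: space_iid_sample finite_PiE)
  have "g \<in> borel_measurable (iid_sample J P)"
    by (rule measurableI) (auto simp: sets_iid_sample[OF J])
  then show ?thesis
    by (rule integrable_const_bound[where B = "Max ((\<lambda>y. norm (g y)) ` space (iid_sample J P))", rotated])
      (use finite_space in \<open>auto intro!: AE_I2 Max_ge\<close>)
qed

lemma integral_prod_iid_sample:
  fixes P :: "'s::finite pmf" and g :: "'s \<Rightarrow> real"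
  assumes J: "finite J"
  shows "(\<integral>y. (\<Prod>t\<in>J. g (y t)) \<partial>iid_sample J P) = (\<Sum>i\<in>UNIV. pmf P i * g i) ^ card J"
proof -
  interpret product_prob_space "\<lambda>_::nat. measure_pmf P" UNIV
    by (intro product_prob_spaceI measure_pmf.prob_space_axioms)
  have "(\<integral>y. (\<Prod>t\<in>J. g (y t)) \<partial>iid_sample J P) = (\<Prod>t\<in>J. integral\<^sup>L (measure_pmf P) g)"
    by (rule product_integral_prod[OF J, of "\<lambda>_. g"]) (simp add: integrable_measure_pmf_finite)
  also have "integral\<^sup>L (measure_pmf P) g = (\<Sum>i\<in>UNIV. pmf P i * g i)"
    by (subst integral_measure_pmf_real[where A = UNIV]) (auto simp: mult.commute)
  finally show ?thesis
    by simp
qed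

lemma prob_space_Pinf: "prob_space (Pinf P)"
  unfolding Pinf_def by (intro prob_space_PiM measure_pmf.prob_space_axioms)

lemma measurable_restrict_Pinf: "(\<lambda>\<omega>. restrict \<omega> J) \<in> measurable (Pinf P) (iid_sample J P)"
  unfolding Pinf_def by (rule measurable_restrict_subset) simp

lemma emp_restrict: "emp T (restrict \<omega> {1..T}) = emp T \<omega>"
  unfolding emp_def by (intro ext arg_cong2[where f = "(/)"] arg_cong[where f = "\<lambda>A. real (card A)"]) auto

lemma emp_event_eq_vimage:
  "{\<omega> \<in> space (Pinf P). Q (emp T \<omega>)}
     = (\<lambda>\<omega>. restrict \<omega> {1..T}) -` {y \<in> space (iid_sample {1..T} P). Q (emp T y)} \<inter> space (Pinf P)"
  by (auto simp: emp_restrict[simplified] space_iid_sample)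

lemma sets_Pinf_emp:
  fixes P :: "'s::finite pmf"
  shows "{\<omega> \<in> space (Pinf P). Q (emp T \<omega>)} \<in> sets (Pinf P)"
  unfolding emp_event_eq_vimage
  by (rule measurable_sets[OF measurable_restrict_Pinf]) (simp add: sets_iid_sample)

lemma measure_Pinf_emp:
  fixes P :: "'s::finite pmf"
  shows "measure (Pinf P) {\<omega> \<in> space (Pinf P). Q (emp T \<omega>)}
    = measure (iid_sample {1..T} P) {y \<in> space (iid_sample {1..T} P). Q (emp T y)}"
proof -
  interpret product_prob_space "\<lambda>_::nat. measure_pmf P" UNIV
    by (intro product_prob_spaceI measure_pmf.prob_space_axioms)
  have "measure (Pinf P) ((\<lambda>\<omega>. restrict \<omega> {1..T}) -` {y \<in> space (iid_sample {1..T} P). Q (emp T y)} \<inter> space (Pinf P))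
      = measure (distr (Pinf P) (iid_sample {1..T} P) (\<lambda>\<omega>. restrict \<omega> {1..T})) {y \<in> space (iid_sample {1..T} P). Q (emp T y)}"
    by (rule measure_distr[symmetric, OF measurable_restrict_Pinf]) (simp add: sets_iid_sample)
  also have "distr (Pinf P) (iid_sample {1..T} P) (\<lambda>\<omega>. restrict \<omega> {1..T}) = iid_sample {1..T} P"
    unfolding Pinf_def by (rule distr_PiM_restrict_finite) simp_all
  finally show ?thesis
    unfolding emp_event_eq_vimage .
qed

lemma sum_emp:
  fixes g :: "'s::finite \<Rightarrow> real"
  shows "(\<Sum>i\<in>UNIV. g i * emp T \<omega> i) = (\<Sum>t\<in>{1..T}. g (\<omega> t)) / real T"
proof -
  have "(\<Sum>t\<in>{1..T}. g (\<omega> t)) = (\<Sum>i\<in>UNIV. \<Sum>t\<in>{t\<in>{1..T}. \<omega> t = i}. g (\<omega> t))"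
    by (rule sum.group[symmetric]) auto
  also have "\<dots> = (\<Sum>i\<in>UNIV. g i * real (card {t\<in>{1..T}. \<omega> t = i}))"
    by (simp add: mult.commute)
  finally show ?thesis
    by (simp add: emp_def sum_divide_distrib[symmetric])
qed

lemma sum_emp_eq_1:
  assumes "T \<ge> 1"
  shows "sum (emp T \<omega>) (UNIV :: 's::finite set) = 1"
  using sum_emp[of "\<lambda>_. 1" T \<omega>] assms by simp

lemma emp_nonneg: "emp T \<omega> i \<ge> 0"
  unfolding emp_def by simp

lemma chernoff_iid_sample:
  fixes f :: "'s::finite \<Rightarrow> real" and P :: "'s pmf"
  assumes J: "finite J" and l: "l > 0"
  shows "measure (iid_sample J P) {y \<in> space (iid_sample J P). (\<Sum>t\<in>J. f (y t)) \<ge> \<theta>}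
    \<le> exp (- l * \<theta>) * (\<Sum>i\<in>UNIV. pmf P i * exp (l * f i)) ^ card J"
proof -
  let ?N = "iid_sample J P"
  interpret N: prob_space ?N
    by (rule prob_space_iid_sample)
  have "measure ?N {y \<in> space ?N. (\<Sum>t\<in>J. f (y t)) \<ge> \<theta>}
      \<le> exp (- l * \<theta>) * (\<integral>y\<in>space ?N. exp (l * (\<Sum>t\<in>J. f (y t))) \<partial>?N)"
    by (intro N.Chernoff_ineq_ge l) (simp_all add: set_integrable_def integrable_iid_sample[OF J])
  also have "(\<integral>y\<in>space ?N. exp (l * (\<Sum>t\<in>J. f (y t))) \<partial>?N) = (\<integral>y. (\<Prod>t\<in>J. exp (l * f (y t))) \<partial>?N)"
    by (simp add: set_integral_space[OF integrable_iid_sample[OF J]] sum_distrib_left exp_sum[OF J])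
  also have "\<dots> = (\<Sum>i\<in>UNIV. pmf P i * exp (l * f i)) ^ card J"
    by (rule integral_prod_iid_sample[OF J])
  finally show ?thesis .
qed

text \<open>The Chernoff parameter \<open>l = r / (z + c r)\<close>, with \<open>r = sqrt (2a)\<close>, \<open>z = sqrt (v n)\<close> and
  \<open>c = b / 3\<close>, makes the exponent of the Bernstein moment bound exactly \<open>-a\<close>.\<close>
lemma bernstein_exponent_eq:
  fixes r z c a l n v :: real
  assumes r: "r\<^sup>2 = 2 * a" and z: "z\<^sup>2 = v * n" and z0: "z > 0" and c0: "c \<ge> 0" and r0: "r \<ge> 0"
    and l: "l = r / (z + c * r)"
  shows "- l * (z * r + c * a) + n * (l\<^sup>2 * v * 3 / (6 - 2 * (l * (3 * c)))) = - a"
proof -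
  define D where "D = z + c * r"
  have D0: "D > 0"
    using z0 c0 r0 by (simp add: D_def add_pos_nonneg)
  have "6 - 2 * (l * (3 * c)) = 6 * z / D"
    using D0 by (simp add: l D_def field_simps)
  then have "n * (l\<^sup>2 * v * 3 / (6 - 2 * (l * (3 * c)))) = r\<^sup>2 * (v * n) / (2 * z * D)"
    using D0 z0 by (simp add: l D_def[symmetric] field_simps power2_eq_square)
  also have "\<dots> = (2 * a) * z\<^sup>2 / (2 * z * D)"
    by (simp only: r z[symmetric])
  also have "\<dots> = a * z / D"
    using D0 z0 by (simp add: field_simps power2_eq_square)
  finally have A: "n * (l\<^sup>2 * v * 3 / (6 - 2 * (l * (3 * c)))) = a * z / D" .
  have B: "l * (z * r + c * a) = (r\<^sup>2 * z + c * a * r) / D"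
    using D0 by (simp add: l D_def[symmetric] field_simps power2_eq_square)
  have "- l * (z * r + c * a) + n * (l\<^sup>2 * v * 3 / (6 - 2 * (l * (3 * c))))
      = - ((2 * a * z + c * a * r) / D) + a * z / D"
    unfolding minus_mult_left[symmetric] A B r ..
  also have "\<dots> = - a * (z + c * r) / D"
    using D0 by (simp add: field_simps)
  also have "\<dots> = - a"
    using D0 by (simp add: D_def)
  finally show ?thesis .
qed

lemma nonneg_of_centered_le:
  fixes f :: "'s::finite \<Rightarrow> real"
  assumes mean: "(\<Sum>i\<in>UNIV. pmf P i * f i) = 0" and fb: "\<And>i. f i \<le> b"
  shows "0 \<le> b"
proof -
  have "0 = (\<Sum>i\<in>UNIV. pmf P i * f i)"
    using mean by simp
  also have "\<dots> \<le> (\<Sum>i\<in>UNIV. pmf P i * b)"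
    by (intro sum_mono mult_left_mono fb) simp
  finally show ?thesis
    by (simp add: sum_distrib_right[symmetric] sum_pmf_eq_1)
qed

lemma bernstein_iid_sample_nondegenerate:
  fixes f :: "'s::finite \<Rightarrow> real" and J :: "nat set" and P :: "'s pmf"
  assumes J: "finite J" "J \<noteq> {}" and mean: "(\<Sum>i\<in>UNIV. pmf P i * f i) = 0"
    and fb: "\<And>i. f i \<le> b" and fv: "(\<Sum>i\<in>UNIV. pmf P i * (f i)\<^sup>2) \<le> v" and v: "v > 0" and a: "a > 0"
  shows "measure (iid_sample J P)
     {y \<in> space (iid_sample J P). (\<Sum>t\<in>J. f (y t)) > sqrt (2 * v * card J * a) + b * a / 3}
     \<le> exp (- a)"
proof -
  let ?N = "iid_sample J P"
  interpret N: prob_space ?N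
    by (rule prob_space_iid_sample)
  define n where "n = real (card J)"
  define z where "z = sqrt (v * n)"
  define r where "r = sqrt (2 * a)"
  define c where "c = b / 3"
  define l where "l = r / (z + c * r)"
  have n0: "n > 0"
    using J by (simp add: n_def card_gt_0_iff)
  have z0: "z > 0"
    using v n0 by (simp add: z_def)
  have r0: "r \<ge> 0" and c0: "c \<ge> 0"
    using a nonneg_of_centered_le[OF mean fb] by (simp_all add: r_def c_def)
  have D0: "z + c * r > 0"
    using z0 c0 r0 by (simp add: add_pos_nonneg)
  have l0: "l > 0"
    using D0 a by (simp add: l_def r_def)
  have lb: "l * b < 3"
    using D0 z0 by (simp add: l_def c_def field_simps)
  have threshold: "sqrt (2 * v * card J * a) + b * a / 3 = z * r + c * a"
    by (simp add: z_def r_def c_def n_def real_sqrt_mult[symmetric] mult_ac)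
  have "measure ?N {y \<in> space ?N. (\<Sum>t\<in>J. f (y t)) > z * r + c * a}
      \<le> measure ?N {y \<in> space ?N. (\<Sum>t\<in>J. f (y t)) \<ge> z * r + c * a}"
    by (intro N.finite_measure_mono) (auto simp: sets_iid_sample[OF J(1)])
  also have "\<dots> \<le> exp (- l * (z * r + c * a)) * (\<Sum>i\<in>UNIV. pmf P i * exp (l * f i)) ^ card J"
    by (rule chernoff_iid_sample[OF J(1) l0])
  also have "\<dots> \<le> exp (- l * (z * r + c * a)) * exp (l\<^sup>2 * v * 3 / (6 - 2 * (l * b))) ^ card J"
    using l0 lb by (intro mult_left_mono power_mono weighted_sum_exp_le[OF _ _ mean fb fv])
      (auto simp: sum_pmf_eq_1 intro!: sum_nonneg)
  also have "\<dots> = exp (- l * (z * r + c * a) + n * (l\<^sup>2 * v * 3 / (6 - 2 * (l * (3 * c)))))"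
    by (simp add: exp_of_nat_mult[symmetric] n_def c_def mult_exp_exp)
  also have "\<dots> = exp (- a)"
    using v n0 a z0 c0 r0 by (subst bernstein_exponent_eq) (simp_all add: r_def z_def l_def)
  finally show ?thesis
    unfolding threshold .
qed

lemma bernstein_iid_sample:
  fixes f :: "'s::finite \<Rightarrow> real" and J :: "nat set" and P :: "'s pmf"
  assumes J: "finite J" and pos: "\<And>i. pmf P i > 0" and mean: "(\<Sum>i\<in>UNIV. pmf P i * f i) = 0"
    and fb: "\<And>i. f i \<le> b" and fv: "(\<Sum>i\<in>UNIV. pmf P i * (f i)\<^sup>2) \<le> v" and a: "a > 0"
  shows "measure (iid_sample J P)
     {y \<in> space (iid_sample J P). (\<Sum>t\<in>J. f (y t)) > sqrt (2 * v * card J * a) + b * a / 3}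
     \<le> exp (- a)"
proof -
  have v0: "0 \<le> v"
    using fv by (rule order.trans[rotated]) (auto intro!: sum_nonneg)
  show ?thesis
  proof (cases "v = 0 \<or> J = {}")
    case True
    \<comment> \<open>The positivity of \<open>P\<close> is used only here: a vanishing second moment forces \<open>f = 0\<close>.\<close>
    have "(\<Sum>t\<in>J. f (y t)) = 0" for y
    proof (cases "J = {}")
      case False
      then have "(\<Sum>i\<in>UNIV. pmf P i * (f i)\<^sup>2) = 0"
        using True fv by (intro antisym sum_nonneg) auto
      then have "pmf P i * (f i)\<^sup>2 = 0" for i
        by (subst (asm) sum_nonneg_eq_0_iff) auto
      then have "f i = 0" for i
        using pos[of i] by (metis less_irrefl mult_eq_0_iff power_eq_0_iff)
      then show ?thesis
        by simp
    qed simp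
    moreover have "0 \<le> sqrt (2 * v * card J * a) + b * a / 3"
      using a v0 nonneg_of_centered_le[OF mean fb] by simp
    ultimately show ?thesis
      by (simp add: not_less)
  next
    case False
    then show ?thesis
      using v0 by (intro bernstein_iid_sample_nondegenerate[OF J _ mean fb fv _ a]) auto
  qed
qed

lemma bernstein_emp:
  fixes f :: "'s::finite \<Rightarrow> real" and P :: "'s pmf"
  assumes pos: "\<And>i. pmf P i > 0" and T: "T \<ge> 1" and a: "a > 0"
    and mean: "(\<Sum>i\<in>UNIV. pmf P i * f i) = 0" and fb: "\<And>i. f i \<le> b"
    and fv: "(\<Sum>i\<in>UNIV. pmf P i * (f i)\<^sup>2) \<le> w\<^sup>2" and w: "0 \<le> w"
    and r: "r = sqrt (2 * a / T)"
  shows "measure (Pinf P) {\<omega> \<in> space (Pinf P).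
      (\<Sum>i\<in>UNIV. f i * emp T \<omega> i) > w * r + b * r\<^sup>2 / 6} \<le> exp (- a)"
proof -
  have T0: "real T > 0"
    using T by simp
  have "w * r * real T = sqrt (w\<^sup>2 * (2 * a / T) * (real T)\<^sup>2)"
    unfolding r real_sqrt_mult real_sqrt_abs using w by simp
  also have "w\<^sup>2 * (2 * a / T) * (real T)\<^sup>2 = 2 * w\<^sup>2 * card {1..T} * a"
    using T0 by (simp add: power2_eq_square field_simps)
  finally have sqrt_part: "w * r * real T = sqrt (2 * w\<^sup>2 * card {1..T} * a)" .
  have linear_part: "b * r\<^sup>2 / 6 * real T = b * a / 3"
    using T0 a by (simp add: r)
  have scaled: "(w * r + b * r\<^sup>2 / 6) * real T = sqrt (2 * w\<^sup>2 * card {1..T} * a) + b * a / 3"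
    unfolding distrib_right sqrt_part linear_part ..
  have iff: "(\<Sum>i\<in>UNIV. f i * emp T y i) > w * r + b * r\<^sup>2 / 6
      \<longleftrightarrow> (\<Sum>t\<in>{1..T}. f (y t)) > sqrt (2 * w\<^sup>2 * card {1..T} * a) + b * a / 3" for y
    by (simp only: sum_emp pos_less_divide_eq[OF T0] scaled)
  have "measure (Pinf P) {\<omega> \<in> space (Pinf P). (\<Sum>i\<in>UNIV. f i * emp T \<omega> i) > w * r + b * r\<^sup>2 / 6}
    = measure (iid_sample {1..T} P)
        {y \<in> space (iid_sample {1..T} P). (\<Sum>i\<in>UNIV. f i * emp T y i) > w * r + b * r\<^sup>2 / 6}"
    by (rule measure_Pinf_emp[where Q = "\<lambda>e. (\<Sum>i\<in>UNIV. f i * e i) > w * r + b * r\<^sup>2 / 6"])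
  also have "\<dots> = measure (iid_sample {1..T} P) {y \<in> space (iid_sample {1..T} P).
      (\<Sum>t\<in>{1..T}. f (y t)) > sqrt (2 * w\<^sup>2 * card {1..T} * a) + b * a / 3}"
    by (simp only: iff)
  also have "\<dots> \<le> exp (- a)"
    by (rule bernstein_iid_sample[OF _ pos mean fb fv a]) simp
  finally show ?thesis .
qed

lemma (in prob_space) prob_ge_of_two_exceptional_events:
  assumes "E1 \<in> events" "E2 \<in> events" "prob E1 \<le> e" "prob E2 \<le> e"
    and "{x \<in> space M. G x} \<in> events"
    and "\<And>x. x \<in> space M \<Longrightarrow> x \<notin> E1 \<Longrightarrow> x \<notin> E2 \<Longrightarrow> G x"
  shows "prob {x \<in> space M. G x} \<ge> 1 - 2 * e"
proof -
  have "1 - 2 * e \<le> 1 - prob (E1 \<union> E2)"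
    using measure_Un_le[of E1 M E2] assms(1-4) by linarith
  also have "\<dots> = prob (space M - (E1 \<union> E2))"
    using assms(1,2) by (simp add: prob_compl)
  also have "\<dots> \<le> prob {x \<in> space M. G x}"
    using assms(5,6) by (intro finite_measure_mono) auto
  finally show ?thesis .
qed

lemma prob_emp_ge_of_two_bernstein_controls:
  fixes f g :: "'s::finite \<Rightarrow> real" and P :: "'s pmf"
  assumes pos: "\<And>i. pmf P i > 0" and T: "T \<ge> 1" and a: "a > 0" and r: "r = sqrt (2 * a / T)"
    and f: "(\<Sum>i\<in>UNIV. pmf P i * f i) = 0" "\<And>i. f i \<le> bf"
      "(\<Sum>i\<in>UNIV. pmf P i * (f i)\<^sup>2) \<le> sf\<^sup>2" "0 \<le> sf"
    and g: "(\<Sum>i\<in>UNIV. pmf P i * g i) = 0" "\<And>i. g i \<le> bg"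
      "(\<Sum>i\<in>UNIV. pmf P i * (g i)\<^sup>2) \<le> sg\<^sup>2" "0 \<le> sg"
    and G: "\<And>Q. (\<And>i. Q i \<ge> 0) \<Longrightarrow> sum Q UNIV = 1 \<Longrightarrow>
      (\<Sum>i\<in>UNIV. f i * Q i) \<le> sf * r + bf * r\<^sup>2 / 6 \<Longrightarrow>
      (\<Sum>i\<in>UNIV. g i * Q i) \<le> sg * r + bg * r\<^sup>2 / 6 \<Longrightarrow> G Q"
  shows "measure (Pinf P) {\<omega> \<in> space (Pinf P). G (emp T \<omega>)} \<ge> 1 - 2 * exp (- a)"
proof -
  interpret prob_space "Pinf P"
    by (rule prob_space_Pinf)
  show ?thesis
  proof (rule prob_ge_of_two_exceptional_events[OF sets_Pinf_emp sets_Pinf_emp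
        bernstein_emp[OF pos T a f r] bernstein_emp[OF pos T a g r] sets_Pinf_emp])
    fix \<omega>
    assume "\<omega> \<notin> {\<omega> \<in> space (Pinf P). (\<Sum>i\<in>UNIV. f i * emp T \<omega> i) > sf * r + bf * r\<^sup>2 / 6}"
      and "\<omega> \<notin> {\<omega> \<in> space (Pinf P). (\<Sum>i\<in>UNIV. g i * emp T \<omega> i) > sg * r + bg * r\<^sup>2 / 6}"
      and "\<omega> \<in> space (Pinf P)"
    then show "G (emp T \<omega>)"
      by (intro G emp_nonneg sum_emp_eq_1[OF T]) auto
  qed
qed

lemma var_eq_shift:
  fixes L :: "'x \<Rightarrow> 's::finite \<Rightarrow> real"
  assumes Q1: "sum Q UNIV = 1"
  shows "var L x Q = (\<Sum>i\<in>UNIV. (L x i - c)\<^sup>2 * Q i) - (cost L x Q - c)\<^sup>2"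
proof -
  define m where "m = cost L x Q"
  have mean: "(\<Sum>i\<in>UNIV. (L x i - c) * Q i) = m - c"
    using Q1 by (simp add: m_def cost_def left_diff_distrib sum_subtractf sum_distrib_left[symmetric])
  have "var L x Q = (\<Sum>i\<in>UNIV. (L x i - c)\<^sup>2 * Q i - 2 * (m - c) * ((L x i - c) * Q i) + (m - c)\<^sup>2 * Q i)"
    unfolding var_def m_def[symmetric] by (intro sum.cong) (simp_all add: power2_eq_square algebra_simps)
  also have "\<dots> = (\<Sum>i\<in>UNIV. (L x i - c)\<^sup>2 * Q i) - 2 * (m - c) * (m - c) + (m - c)\<^sup>2"
    using Q1 by (simp add: sum.distrib sum_subtractf sum_distrib_left[symmetric] mean)
  finally show ?thesis
    by (simp add: m_def power2_eq_square)
qed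

lemma var_nonneg:
  assumes "\<And>i. Q i \<ge> 0"
  shows "0 \<le> var L x Q"
  unfolding var_def using assms by (intro sum_nonneg) simp

lemma var_le_bhatia_davis:
  fixes L :: "'x \<Rightarrow> 's::finite \<Rightarrow> real"
  assumes Q0: "\<And>i. Q i \<ge> 0" and Q1: "sum Q UNIV = 1" and bound: "\<And>i. \<bar>L x i\<bar> \<le> K / 2"
  shows "var L x Q \<le> K\<^sup>2 / 4 - (cost L x Q)\<^sup>2"
proof -
  have "(L x i)\<^sup>2 \<le> K\<^sup>2 / 4" for i
    using power_mono[OF bound[of i], of 2] by (simp add: power_divide)
  then have "(\<Sum>i\<in>UNIV. (L x i)\<^sup>2 * Q i) \<le> (\<Sum>i\<in>UNIV. K\<^sup>2 / 4 * Q i)"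
    by (intro sum_mono mult_right_mono Q0)
  also have "\<dots> = K\<^sup>2 / 4"
    by (simp only: sum_distrib_left[symmetric] Q1)
  finally show ?thesis
    using var_eq_shift[OF Q1, of L x 0] by simp
qed

lemma var_cost_bounds:
  fixes L :: "'x \<Rightarrow> 's::finite \<Rightarrow> real"
  assumes Q0: "\<And>i. Q i \<ge> 0" and Q1: "sum Q UNIV = 1" and bound: "\<And>i. \<bar>L x i\<bar> \<le> K / 2"
  shows "4 * var L x Q \<le> K\<^sup>2" and "\<bar>cost L x Q\<bar> \<le> K / 2"
proof -
  have bhatia_davis: "var L x Q \<le> K\<^sup>2 / 4 - (cost L x Q)\<^sup>2"
    using Q0 Q1 bound by (rule var_le_bhatia_davis)
  moreover have "0 \<le> var L x Q"
    using Q0 by (rule var_nonneg)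
  ultimately have var_le: "4 * var L x Q \<le> K\<^sup>2" and cost_le: "(cost L x Q)\<^sup>2 \<le> K\<^sup>2 / 4"
    using zero_le_power2[of "cost L x Q"] by linarith+
  from var_le show "4 * var L x Q \<le> K\<^sup>2" .
  from cost_le have "sqrt ((cost L x Q)\<^sup>2) \<le> sqrt ((K / 2)\<^sup>2)"
    by (intro real_sqrt_le_mono) (simp add: power_divide)
  moreover have "0 \<le> K"
    using bound[of undefined] by linarith
  ultimately show "\<bar>cost L x Q\<bar> \<le> K / 2"
    by simp
qed

lemma le_of_quadratic_le:
  fixes w s q d :: real
  assumes quadratic: "4 * w\<^sup>2 \<le> s\<^sup>2 * (q\<^sup>2 - d\<^sup>2) + 4 * d * s * w"
    and s0: "0 \<le> s" and d0: "0 \<le> d" and dq: "d \<le> q"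
  shows "w \<le> s * q"
proof -
  have "4 * w\<^sup>2 - 4 * d * s * w \<le> s\<^sup>2 * (q\<^sup>2 - d\<^sup>2)"
    using quadratic by (simp only: diff_le_eq)
  then have "4 * w\<^sup>2 - 4 * d * s * w + d\<^sup>2 * s\<^sup>2 \<le> s\<^sup>2 * (q\<^sup>2 - d\<^sup>2) + d\<^sup>2 * s\<^sup>2"
    by (rule add_right_mono)
  moreover have "(2 * w - d * s)\<^sup>2 = 4 * w\<^sup>2 - 4 * d * s * w + d\<^sup>2 * s\<^sup>2"
    and "s\<^sup>2 * (q\<^sup>2 - d\<^sup>2) + d\<^sup>2 * s\<^sup>2 = (s * q)\<^sup>2"
    by (simp_all add: power2_eq_square algebra_simps)
  ultimately have "(2 * w - d * s)\<^sup>2 \<le> (s * q)\<^sup>2"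
    by simp
  then have "2 * w - d * s \<le> s * q"
    by (rule power2_le_imp_le) (use s0 d0 dq in auto)
  moreover have "d * s \<le> s * q"
    using mult_right_mono[OF dq s0] by (simp add: mult.commute)
  ultimately show ?thesis
    by linarith
qed

lemma le_of_self_bound:
  fixes v s2 c K :: real
  assumes v0: "0 \<le> v" and s2_0: "0 \<le> s2" and bhatia_davis: "s2 \<le> K\<^sup>2 / 4 - c\<^sup>2"
    and self_bound: "v \<le> (K\<^sup>2 / 4 - c\<^sup>2 - s2) * s2 + 2 * \<bar>c\<bar> * sqrt s2 * sqrt v"
  shows "v \<le> s2 * (K\<^sup>2 - 4 * s2)"
proof -
  define s where "s = sqrt s2"
  define q where "q = sqrt (K\<^sup>2 - 4 * s2)"
  have K_ge: "4 * s2 \<le> K\<^sup>2"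
    using bhatia_davis zero_le_power2[of c] by linarith
  have s_sq: "s\<^sup>2 = s2" and q_sq: "q\<^sup>2 = K\<^sup>2 - 4 * s2" and v_sq: "(sqrt v)\<^sup>2 = v"
    using s2_0 K_ge v0 by (simp_all add: s_def q_def)
  have "4 * (sqrt v)\<^sup>2 \<le> 4 * ((K\<^sup>2 / 4 - c\<^sup>2 - s2) * s2 + 2 * \<bar>c\<bar> * sqrt s2 * sqrt v)"
    using self_bound v_sq by simp
  also have "\<dots> = s\<^sup>2 * (q\<^sup>2 - (2 * \<bar>c\<bar>)\<^sup>2) + 4 * (2 * \<bar>c\<bar>) * s * sqrt v"
    unfolding q_sq using s2_0 by (simp add: s_def power_mult_distrib power2_eq_square algebra_simps)
  finally have quadratic: "4 * (sqrt v)\<^sup>2 \<le> s\<^sup>2 * (q\<^sup>2 - (2 * \<bar>c\<bar>)\<^sup>2) + 4 * (2 * \<bar>c\<bar>) * s * sqrt v" .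
  have "sqrt ((2 * \<bar>c\<bar>)\<^sup>2) \<le> q"
    unfolding q_def using bhatia_davis by (intro real_sqrt_le_mono) (simp add: power_mult_distrib)
  then have "2 * \<bar>c\<bar> \<le> q"
    by (simp only: real_sqrt_abs)
  with quadratic have "sqrt v \<le> s * q"
    using s2_0 by (intro le_of_quadratic_le) (simp_all add: s_def)
  then have "(sqrt v)\<^sup>2 \<le> (s * q)\<^sup>2"
    by (rule power_mono) (simp add: v0)
  then show ?thesis
    by (simp only: v_sq power_mult_distrib s_sq q_sq)
qed

lemma third_moment_sq_le:
  fixes Q y :: "'s::finite \<Rightarrow> real"
  assumes Q0: "\<And>i. Q i \<ge> 0" and mean: "(\<Sum>i\<in>UNIV. Q i * y i) = 0"
  defines "s2 \<equiv> \<Sum>i\<in>UNIV. Q i * (y i)\<^sup>2"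
  shows "(\<Sum>i\<in>UNIV. Q i * y i ^ 3)\<^sup>2 \<le> s2 * (\<Sum>i\<in>UNIV. Q i * (s2 - (y i)\<^sup>2)\<^sup>2)"
proof -
  have "(\<Sum>i\<in>UNIV. (sqrt (Q i) * y i) * (sqrt (Q i) * ((y i)\<^sup>2 - s2)))
      = (\<Sum>i\<in>UNIV. Q i * y i ^ 3 - s2 * (Q i * y i))"
    using Q0 by (intro sum.cong) (simp_all add: power2_eq_square power3_eq_cube algebra_simps)
  also have "\<dots> = (\<Sum>i\<in>UNIV. Q i * y i ^ 3)"
    by (simp add: sum_subtractf sum_distrib_left[symmetric] mean)
  finally have "(\<Sum>i\<in>UNIV. Q i * y i ^ 3)\<^sup>2
      = (\<Sum>i\<in>UNIV. (sqrt (Q i) * y i) * (sqrt (Q i) * ((y i)\<^sup>2 - s2)))\<^sup>2"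
    by simp
  also have "\<dots> \<le> (\<Sum>i\<in>UNIV. (sqrt (Q i) * y i)\<^sup>2) * (\<Sum>i\<in>UNIV. (sqrt (Q i) * ((y i)\<^sup>2 - s2))\<^sup>2)"
    by (rule Cauchy_Schwarz_ineq_sum)
  also have "\<dots> = s2 * (\<Sum>i\<in>UNIV. Q i * (s2 - (y i)\<^sup>2)\<^sup>2)"
    using Q0 by (simp add: s2_def power_mult_distrib power2_commute)
  finally show ?thesis .
qed

lemma sum_sq_deviation_of_square:
  fixes Q y :: "'s::finite \<Rightarrow> real"
  assumes Q1: "sum Q UNIV = 1"
  defines "s2 \<equiv> \<Sum>i\<in>UNIV. Q i * (y i)\<^sup>2"
  shows "(\<Sum>i\<in>UNIV. Q i * (s2 - (y i)\<^sup>2)\<^sup>2) = (\<Sum>i\<in>UNIV. Q i * y i ^ 4) - s2\<^sup>2"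
proof -
  have "(\<Sum>i\<in>UNIV. Q i * (s2 - (y i)\<^sup>2)\<^sup>2)
      = (\<Sum>i\<in>UNIV. Q i * y i ^ 4 - 2 * s2 * (Q i * (y i)\<^sup>2) + s2\<^sup>2 * Q i)"
    by (intro sum.cong) (simp_all add: power2_eq_square power4_eq_xxxx algebra_simps)
  also have "\<dots> = (\<Sum>i\<in>UNIV. Q i * y i ^ 4) - 2 * s2 * s2 + s2\<^sup>2"
    using Q1 by (simp add: sum.distrib sum_subtractf sum_distrib_left[symmetric] s2_def)
  finally show ?thesis
    by (simp add: power2_eq_square)
qed

lemma fourth_moment_le:
  fixes Q y :: "'s::finite \<Rightarrow> real"
  assumes range: "\<And>i. (y i + c)\<^sup>2 \<le> K\<^sup>2 / 4" and Q0: "\<And>i. Q i \<ge> 0"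
  shows "(\<Sum>i\<in>UNIV. Q i * y i ^ 4)
    \<le> (K\<^sup>2 / 4 - c\<^sup>2) * (\<Sum>i\<in>UNIV. Q i * (y i)\<^sup>2) - 2 * c * (\<Sum>i\<in>UNIV. Q i * y i ^ 3)"
proof -
  have "y i ^ 4 \<le> (K\<^sup>2 / 4 - c\<^sup>2) * (y i)\<^sup>2 - 2 * c * y i ^ 3" for i
    using mult_left_mono[OF range[of i] zero_le_power2[of "y i"]]
    by (simp add: power2_eq_square power3_eq_cube power4_eq_xxxx algebra_simps)
  then have "(\<Sum>i\<in>UNIV. Q i * y i ^ 4) \<le> (\<Sum>i\<in>UNIV. Q i * ((K\<^sup>2 / 4 - c\<^sup>2) * (y i)\<^sup>2 - 2 * c * y i ^ 3))"
    by (intro sum_mono mult_left_mono Q0)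
  also have "\<dots> = (K\<^sup>2 / 4 - c\<^sup>2) * (\<Sum>i\<in>UNIV. Q i * (y i)\<^sup>2) - 2 * c * (\<Sum>i\<in>UNIV. Q i * y i ^ 3)"
    by (simp add: right_diff_distrib sum_subtractf sum.distrib sum_distrib_left algebra_simps)
  finally show ?thesis .
qed

lemma variance_of_squared_deviation_le:
  fixes L :: "'x \<Rightarrow> 's::finite \<Rightarrow> real"
  assumes Q0: "\<And>i. Q i \<ge> 0" and Q1: "sum Q UNIV = 1" and bound: "\<And>i. \<bar>L x i\<bar> \<le> K / 2"
  shows "(\<Sum>i\<in>UNIV. Q i * (var L x Q - (L x i - cost L x Q)\<^sup>2)\<^sup>2) \<le> var L x Q * (K\<^sup>2 - 4 * var L x Q)"
proof -
  define c where "c = cost L x Q"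
  define s2 where "s2 = var L x Q"
  define y where "y i = L x i - c" for i
  define v where "v = (\<Sum>i\<in>UNIV. Q i * (s2 - (y i)\<^sup>2)\<^sup>2)"
  define m3 where "m3 = (\<Sum>i\<in>UNIV. Q i * y i ^ 3)"
  have s2_eq: "s2 = (\<Sum>i\<in>UNIV. Q i * (y i)\<^sup>2)"
    by (simp add: s2_def var_def y_def c_def)
  have mean: "(\<Sum>i\<in>UNIV. Q i * y i) = 0"
    using Q1 by (simp add: y_def c_def cost_def right_diff_distrib sum_subtractf
        sum_distrib_right[symmetric] mult.commute)
  have bhatia_davis: "s2 \<le> K\<^sup>2 / 4 - c\<^sup>2"
    unfolding s2_def c_def by (rule var_le_bhatia_davis[of Q L x K, OF Q0 Q1 bound])
  have s2_nonneg: "0 \<le> s2" and v_nonneg: "0 \<le> v"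
    unfolding s2_eq v_def using Q0 by (auto intro!: sum_nonneg)
  have "(y i + c)\<^sup>2 \<le> K\<^sup>2 / 4" for i
    using power_mono[OF bound[of i], of 2] by (simp add: y_def power_divide)
  then have "(\<Sum>i\<in>UNIV. Q i * y i ^ 4) \<le> (K\<^sup>2 / 4 - c\<^sup>2) * s2 - 2 * c * m3"
    unfolding s2_eq m3_def using Q0 by (rule fourth_moment_le)
  then have v_le: "v \<le> (K\<^sup>2 / 4 - c\<^sup>2) * s2 - 2 * c * m3 - s2\<^sup>2"
    using sum_sq_deviation_of_square[OF Q1, of y] by (simp add: v_def s2_eq)
  have m3_le: "\<bar>m3\<bar> \<le> sqrt s2 * sqrt v"
  proof -
    have "sqrt (m3\<^sup>2) \<le> sqrt (s2 * v)"
      using third_moment_sq_le[OF Q0 mean] by (intro real_sqrt_le_mono) (simp add: m3_def v_def s2_eq)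
    then show ?thesis
      by (simp add: real_sqrt_mult)
  qed
  have "- (2 * c * m3) \<le> \<bar>2 * c * m3\<bar>"
    by (rule abs_ge_minus_self)
  also have "\<dots> = 2 * \<bar>c\<bar> * \<bar>m3\<bar>"
    by (simp add: abs_mult)
  also have "\<dots> \<le> 2 * \<bar>c\<bar> * (sqrt s2 * sqrt v)"
    using m3_le by (intro mult_left_mono) auto
  finally have "- (2 * c * m3) \<le> 2 * \<bar>c\<bar> * sqrt s2 * sqrt v"
    by (simp only: mult.assoc)
  moreover have "(K\<^sup>2 / 4 - c\<^sup>2 - s2) * s2 = (K\<^sup>2 / 4 - c\<^sup>2) * s2 - s2\<^sup>2"
    by (simp add: power2_eq_square algebra_simps)
  ultimately have "v \<le> (K\<^sup>2 / 4 - c\<^sup>2 - s2) * s2 + 2 * \<bar>c\<bar> * sqrt s2 * sqrt v"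
    using v_le by linarith
  then have "v \<le> s2 * (K\<^sup>2 - 4 * s2)"
    by (rule le_of_self_bound[OF v_nonneg s2_nonneg bhatia_davis])
  then show ?thesis
    by (simp add: v_def y_def c_def s2_def)
qed

lemma mult_le_of_sq_le_diff:
  fixes q K s :: real
  assumes qK: "q\<^sup>2 \<le> K\<^sup>2 - 4 * s\<^sup>2" and s0: "0 \<le> s" and sK: "2 * s \<le> K"
  shows "q * K \<le> K\<^sup>2 - 2 * s\<^sup>2"
proof (rule power2_le_imp_le)
  have "(q * K)\<^sup>2 \<le> (K\<^sup>2 - 4 * s\<^sup>2) * K\<^sup>2"
    using mult_right_mono[OF qK zero_le_power2[of K]] by (simp add: power_mult_distrib)
  also have "\<dots> \<le> (K\<^sup>2 - 2 * s\<^sup>2)\<^sup>2"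
    by (simp add: power2_eq_square algebra_simps) (simp add: s0)
  finally show "(q * K)\<^sup>2 \<le> (K\<^sup>2 - 2 * s\<^sup>2)\<^sup>2" .
  have "4 * s\<^sup>2 \<le> K\<^sup>2"
    using power_mono[OF sK, of 2] s0 by (simp add: power_mult_distrib)
  then show "0 \<le> K\<^sup>2 - 2 * s\<^sup>2"
    using zero_le_power2[of s] by linarith
qed

lemma deviation_polynomial_neg:
  fixes K s q \<rho> :: real
  assumes qK: "q * K \<le> K\<^sup>2 - 2 * s\<^sup>2" and \<rho>0: "0 \<le> \<rho>" and \<rho>s: "\<rho> < s" and K_pos: "0 < K"
  shows "- 2 * s * K\<^sup>2 + \<rho> * K\<^sup>2 + s * (q * K) + 7 / 6 * s\<^sup>2 * \<rho> + s * \<rho>\<^sup>2 / 3 + \<rho> ^ 3 / 36 < 0"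
proof -
  have s_pos: "0 < s"
    using \<rho>0 \<rho>s by linarith
  have "s * (q * K) \<le> s * (K\<^sup>2 - 2 * s\<^sup>2)"
    using qK s_pos by simp
  moreover have "\<rho> * K\<^sup>2 < s * K\<^sup>2"
    using \<rho>s K_pos by simp
  moreover have "s\<^sup>2 * \<rho> \<le> s ^ 3" and "s * \<rho>\<^sup>2 \<le> s ^ 3" and "\<rho> ^ 3 \<le> s ^ 3"
    using \<rho>0 \<rho>s s_pos power_mono[of \<rho> s 2] power_mono[of \<rho> s 3]
    by (auto simp: power2_eq_square power3_eq_cube intro: mult_left_mono)
  moreover have "0 < s ^ 3"
    using s_pos by simp
  ultimately show ?thesis
    by (simp add: right_diff_distrib power2_eq_square power3_eq_cube)
qed

lemma mean_gap_le_empirical_deviation: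
  fixes K s q r u Z :: real
  assumes s0: "0 \<le> s" and sK: "2 * s \<le> K" and r0: "0 < r" and q0: "0 \<le> q"
    and qK: "q\<^sup>2 \<le> K\<^sup>2 - 4 * s\<^sup>2" and V0: "0 \<le> Z - u\<^sup>2"
    and u: "u \<le> s * r + K * r\<^sup>2 / 6" and Z: "s\<^sup>2 - Z \<le> s * q * r + s\<^sup>2 * r\<^sup>2 / 6"
  shows "u \<le> r * sqrt (Z - u\<^sup>2) + 7 * K * r\<^sup>2 / 6"
proof (rule ccontr)
  define V where "V = Z - u\<^sup>2"
  define \<rho> where "\<rho> = K * r"
  assume "\<not> ?thesis"
  then have gap: "r * sqrt V + 7 * K * r\<^sup>2 / 6 < u"
    by (simp add: V_def)
  have K0: "0 \<le> K" and \<rho>0: "0 \<le> \<rho>"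
    using s0 sK r0 by (simp_all add: \<rho>_def)
  have Kr2: "K * r\<^sup>2 = \<rho> * r"
    by (simp add: \<rho>_def power2_eq_square)
  have "r * (s - \<rho>) = s * r - K * r\<^sup>2"
    by (simp add: \<rho>_def power2_eq_square algebra_simps)
  then have "r * sqrt V < r * (s - \<rho>)"
    using gap u by linarith
  then have sqrt_lt: "sqrt V < s - \<rho>"
    using r0 by simp
  then have \<rho>s: "\<rho> < s"
    using real_sqrt_ge_zero[OF V0[folded V_def]] by linarith
  then have s_pos: "0 < s" and K_pos: "0 < K"
    using \<rho>0 sK by linarith+
  have "V < (s - \<rho>)\<^sup>2"
    using power_strict_mono[OF sqrt_lt real_sqrt_ge_zero, of 2] V0 by (simp add: V_def)
  moreover have "u\<^sup>2 \<le> (s * r + \<rho> * r / 6)\<^sup>2"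
  proof (rule power_mono)
    show "u \<le> s * r + \<rho> * r / 6"
      using u Kr2 by simp
    have "0 \<le> r * sqrt V + 7 * K * r\<^sup>2 / 6"
      using r0 K0 V0 by (intro add_nonneg_nonneg mult_nonneg_nonneg) (simp_all add: V_def)
    then show "0 \<le> u"
      using gap by linarith
  qed
  ultimately have "0 < (s - \<rho>)\<^sup>2 - (s\<^sup>2 - s * q * r - s\<^sup>2 * r\<^sup>2 / 6 - (s * r + \<rho> * r / 6)\<^sup>2)"
    using Z by (simp add: V_def)
  also have "\<dots> = - 2 * s * \<rho> + \<rho>\<^sup>2 + s * q * r + 7 / 6 * s\<^sup>2 * r\<^sup>2 + s * \<rho> * r\<^sup>2 / 3 + \<rho>\<^sup>2 * r\<^sup>2 / 36"
    (is "_ = ?E")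
    by (simp add: power2_eq_square algebra_simps)
  finally have E_pos: "0 < K\<^sup>2 * ?E"
    using K_pos by simp
  \<comment> \<open>Multiplying by \<open>K\<^sup>2\<close> turns every power of \<open>r\<close> into a power of \<open>\<rho> < s\<close>.\<close>
  have "K\<^sup>2 * ?E = \<rho> * (- 2 * s * K\<^sup>2 + \<rho> * K\<^sup>2 + s * (q * K) + 7 / 6 * s\<^sup>2 * \<rho> + s * \<rho>\<^sup>2 / 3 + \<rho> ^ 3 / 36)"
    by (simp add: \<rho>_def power2_eq_square power3_eq_cube algebra_simps)
  moreover have "- 2 * s * K\<^sup>2 + \<rho> * K\<^sup>2 + s * (q * K) + 7 / 6 * s\<^sup>2 * \<rho> + s * \<rho>\<^sup>2 / 3 + \<rho> ^ 3 / 36 < 0"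
    using mult_le_of_sq_le_diff[OF qK s0 sK] \<rho>0 \<rho>s K_pos by (rule deviation_polynomial_neg)
  ultimately have "K\<^sup>2 * ?E \<le> 0"
    using \<rho>0 by (simp add: mult_nonneg_nonpos)
  then show False
    using E_pos by simp
qed

lemma mean_gap_plus_empirical_deviation_le:
  fixes K s q r u Z :: real
  assumes K0: "0 \<le> K" and s0: "0 \<le> s" and r0: "0 \<le> r" and qK: "q \<le> K"
    and u: "u \<le> s * r + K * r\<^sup>2 / 6" and Z: "Z - s\<^sup>2 \<le> s * q * r + K\<^sup>2 * r\<^sup>2 / 6"
  shows "u + r * sqrt (Z - u\<^sup>2) \<le> 2 * s * r + 7 * K * r\<^sup>2 / 6"
proof -
  have "s * q * r \<le> s * K * r"
    using qK s0 r0 by (simp add: mult_left_mono mult_right_mono)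
  moreover have "(s + K * r / 2)\<^sup>2 = s\<^sup>2 + s * K * r + K\<^sup>2 * r\<^sup>2 / 4"
    by (simp add: power2_eq_square algebra_simps)
  moreover have "0 \<le> K\<^sup>2 * r\<^sup>2" and "0 \<le> u\<^sup>2"
    by simp_all
  ultimately have "Z - u\<^sup>2 \<le> (s + K * r / 2)\<^sup>2"
    using Z by linarith
  then have "sqrt (Z - u\<^sup>2) \<le> s + K * r / 2"
    using real_sqrt_le_mono s0 K0 r0 by fastforce
  then have "r * sqrt (Z - u\<^sup>2) \<le> s * r + K * r\<^sup>2 / 2"
    using mult_left_mono[OF _ r0] by (fastforce simp: power2_eq_square algebra_simps)
  moreover have "0 \<le> K * r\<^sup>2"
    using K0 by simp
  ultimately show ?thesis
    using u by linarith
qed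

lemma cost_le_svp_of_controls:
  fixes L :: "'x \<Rightarrow> 's::finite \<Rightarrow> real"
  assumes Q0: "\<And>i. Q i \<ge> 0" and Q1: "sum Q UNIV = 1"
    and s0: "0 \<le> s" and sK: "2 * s \<le> K" and q0: "0 \<le> q" and qK: "q\<^sup>2 \<le> K\<^sup>2 - 4 * s\<^sup>2"
    and r: "r = sqrt (2 * a T / T)" and r0: "0 < r"
    and first: "(\<Sum>i\<in>UNIV. (c - L x i) * Q i) \<le> s * r + K * r\<^sup>2 / 6"
    and second: "(\<Sum>i\<in>UNIV. (s\<^sup>2 - (L x i - c)\<^sup>2) * Q i) \<le> s * q * r + s\<^sup>2 * r\<^sup>2 / 6"
  shows "c \<le> svp a L x Q T + 7 * K / 3 * (a T / T)"
proof -
  define Z where "Z = (\<Sum>i\<in>UNIV. (L x i - c)\<^sup>2 * Q i)"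
  have "(\<Sum>i\<in>UNIV. (c - L x i) * Q i) = c - cost L x Q"
    and "(\<Sum>i\<in>UNIV. (s\<^sup>2 - (L x i - c)\<^sup>2) * Q i) = s\<^sup>2 - Z"
    using Q1 by (simp_all add: Z_def cost_def left_diff_distrib sum_subtractf sum_distrib_left[symmetric])
  with first second have first: "c - cost L x Q \<le> s * r + K * r\<^sup>2 / 6"
    and second: "s\<^sup>2 - Z \<le> s * q * r + s\<^sup>2 * r\<^sup>2 / 6"
    by simp_all
  have var: "var L x Q = Z - (c - cost L x Q)\<^sup>2"
    using var_eq_shift[OF Q1, of L x c] by (simp add: Z_def power2_commute)
  have "0 \<le> var L x Q"
    using Q0 by (rule var_nonneg)
  then have "c - cost L x Q \<le> r * sqrt (Z - (c - cost L x Q)\<^sup>2) + 7 * K * r\<^sup>2 / 6"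
    using first second unfolding var
    by (intro mean_gap_le_empirical_deviation[OF s0 sK r0 q0 qK])
  moreover have "sqrt (2 * a T / T * var L x Q) = r * sqrt (var L x Q)"
    unfolding r by (rule real_sqrt_mult)
  moreover have "7 * K / 3 * (a T / T) = 7 * K * r\<^sup>2 / 6"
    using r0 by (simp add: r)
  ultimately show ?thesis
    by (simp add: svp_def var)
qed

lemma svp_le_cost_of_controls:
  fixes L :: "'x \<Rightarrow> 's::finite \<Rightarrow> real"
  assumes Q1: "sum Q UNIV = 1"
    and K0: "0 \<le> K" and s0: "0 \<le> s" and qK: "q \<le> K"
    and r: "r = sqrt (2 * a T / T)" and r0: "0 < r"
    and first: "(\<Sum>i\<in>UNIV. (L x i - c) * Q i) \<le> s * r + K * r\<^sup>2 / 6"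
    and second: "(\<Sum>i\<in>UNIV. ((L x i - c)\<^sup>2 - s\<^sup>2) * Q i) \<le> s * q * r + K\<^sup>2 * r\<^sup>2 / 6"
  shows "svp a L x Q T - sqrt (8 * a T / T * s\<^sup>2) - 7 * K / 3 * (a T / T) \<le> c"
proof -
  define Z where "Z = (\<Sum>i\<in>UNIV. (L x i - c)\<^sup>2 * Q i)"
  have "(\<Sum>i\<in>UNIV. (L x i - c) * Q i) = cost L x Q - c"
    and "(\<Sum>i\<in>UNIV. ((L x i - c)\<^sup>2 - s\<^sup>2) * Q i) = Z - s\<^sup>2"
    using Q1 by (simp_all add: Z_def cost_def left_diff_distrib sum_subtractf sum_distrib_left[symmetric])
  with first second have first: "cost L x Q - c \<le> s * r + K * r\<^sup>2 / 6"
    and second: "Z - s\<^sup>2 \<le> s * q * r + K\<^sup>2 * r\<^sup>2 / 6"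
    by simp_all
  have var: "var L x Q = Z - (cost L x Q - c)\<^sup>2"
    using var_eq_shift[OF Q1, of L x c] by (simp add: Z_def)
  have "cost L x Q - c + r * sqrt (Z - (cost L x Q - c)\<^sup>2) \<le> 2 * s * r + 7 * K * r\<^sup>2 / 6"
    using first second
    by (intro mean_gap_plus_empirical_deviation_le[OF K0 s0 _ qK]) (use r0 in simp_all)
  moreover have "sqrt (2 * a T / T * var L x Q) = r * sqrt (var L x Q)"
    unfolding r by (rule real_sqrt_mult)
  moreover have "sqrt (8 * a T / T * s\<^sup>2) = 2 * s * r"
  proof -
    have "8 * a T / T * s\<^sup>2 = 2\<^sup>2 * s\<^sup>2 * (2 * a T / T)"
      by simp
    then show ?thesis
      using s0 by (simp only: real_sqrt_mult real_sqrt_abs r)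
  qed
  moreover have "7 * K / 3 * (a T / T) = 7 * K * r\<^sup>2 / 6"
    using r0 by (simp add: r)
  ultimately show ?thesis
    by (simp add: svp_def var)
qed

lemma svp_upper_confidence:
  fixes L :: "'x \<Rightarrow> 's::finite \<Rightarrow> real" and P :: "'s pmf"
  assumes pos: "\<And>i. pmf P i > 0" and T: "T \<ge> 1" and a: "a T > 0"
    and bound: "\<And>i. \<bar>L x i\<bar> \<le> K / 2"
  shows "measure (Pinf P) {\<omega> \<in> space (Pinf P).
      cost L x (pmf P) \<le> svp a L x (emp T \<omega>) T + 7 * K / 3 * (a T / T)} \<ge> 1 - 2 * exp (- a T)"
proof -
  define c where "c = cost L x (pmf P)"
  define s where "s = sqrt (var L x (pmf P))"
  define q where "q = sqrt (K\<^sup>2 - 4 * s\<^sup>2)"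
  define r where "r = sqrt (2 * a T / T)"
  have P0: "\<And>i. pmf P i \<ge> 0" and P1: "sum (pmf P) UNIV = 1"
    by (simp_all add: sum_pmf_eq_1)
  have s_sq: "s\<^sup>2 = var L x (pmf P)" and s0: "0 \<le> s"
    using var_nonneg[OF P0] by (simp_all add: s_def)
  have K_ge: "4 * s\<^sup>2 \<le> K\<^sup>2" and cK: "\<bar>c\<bar> \<le> K / 2"
    using var_cost_bounds[of "pmf P" L x K, OF P0 P1 bound] by (simp_all add: s_sq c_def)
  then have K0: "0 \<le> K"
    by linarith
  have sK: "2 * s \<le> K"
    by (rule power2_le_imp_le) (use K_ge K0 in \<open>simp_all add: power_mult_distrib\<close>)
  have q_sq: "q\<^sup>2 = K\<^sup>2 - 4 * s\<^sup>2" and q0: "0 \<le> q"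
    using K_ge by (simp_all add: q_def)
  show ?thesis
  proof (rule prob_emp_ge_of_two_bernstein_controls[OF pos T a r_def,
        where f = "\<lambda>i. c - L x i" and bf = K and sf = s
          and g = "\<lambda>i. s\<^sup>2 - (L x i - c)\<^sup>2" and bg = "s\<^sup>2" and sg = "s * q"])
    show "(\<Sum>i\<in>UNIV. pmf P i * (c - L x i)) = 0" "(\<Sum>i\<in>UNIV. pmf P i * (s\<^sup>2 - (L x i - c)\<^sup>2)) = 0"
      using P1 by (simp_all add: s_sq var_def c_def cost_def right_diff_distrib sum_subtractf
          sum_distrib_right[symmetric] mult.commute)
    show "c - L x i \<le> K" "s\<^sup>2 - (L x i - c)\<^sup>2 \<le> s\<^sup>2" for i
      using cK bound[of i] by (auto simp: abs_le_iff)
    show "(\<Sum>i\<in>UNIV. pmf P i * (c - L x i)\<^sup>2) \<le> s\<^sup>2"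
      by (simp add: s_sq var_def c_def power2_commute)
    show "(\<Sum>i\<in>UNIV. pmf P i * (s\<^sup>2 - (L x i - c)\<^sup>2)\<^sup>2) \<le> (s * q)\<^sup>2"
      using variance_of_squared_deviation_le[of "pmf P" L x K, OF P0 P1 bound]
      by (simp add: s_sq[symmetric] c_def[symmetric] power_mult_distrib q_sq)
    show "0 \<le> s * q"
      using s0 q0 by simp
    show "cost L x (pmf P) \<le> svp a L x Q T + 7 * K / 3 * (a T / T)"
      if "\<And>i. Q i \<ge> 0" "sum Q UNIV = 1"
        "(\<Sum>i\<in>UNIV. (c - L x i) * Q i) \<le> s * r + K * r\<^sup>2 / 6"
        "(\<Sum>i\<in>UNIV. (s\<^sup>2 - (L x i - c)\<^sup>2) * Q i) \<le> s * q * r + s\<^sup>2 * r\<^sup>2 / 6" for Q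
      unfolding c_def[symmetric] using that a T q_sq
      by (intro cost_le_svp_of_controls[where a = a and T = T, OF _ _ s0 sK q0 _ r_def]) (simp_all add: r_def)
  qed (rule s0)
qed

lemma svp_lower_confidence:
  fixes L :: "'x \<Rightarrow> 's::finite \<Rightarrow> real" and P :: "'s pmf"
  assumes pos: "\<And>i. pmf P i > 0" and T: "T \<ge> 1" and a: "a T > 0"
    and bound: "\<And>i. \<bar>L x i\<bar> \<le> K / 2"
  shows "measure (Pinf P) {\<omega> \<in> space (Pinf P).
      cost L x (pmf P) \<ge> svp a L x (emp T \<omega>) T - sqrt (8 * a T / T * var L x (pmf P))
        - 7 * K / 3 * (a T / T)} \<ge> 1 - 2 * exp (- a T)"
proof -
  define c where "c = cost L x (pmf P)"
  define s where "s = sqrt (var L x (pmf P))"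
  define q where "q = sqrt (K\<^sup>2 - 4 * s\<^sup>2)"
  define r where "r = sqrt (2 * a T / T)"
  have P0: "\<And>i. pmf P i \<ge> 0" and P1: "sum (pmf P) UNIV = 1"
    by (simp_all add: sum_pmf_eq_1)
  have s_sq: "s\<^sup>2 = var L x (pmf P)" and s0: "0 \<le> s"
    using var_nonneg[OF P0] by (simp_all add: s_def)
  have K_ge: "4 * s\<^sup>2 \<le> K\<^sup>2" and cK: "\<bar>c\<bar> \<le> K / 2"
    using var_cost_bounds[of "pmf P" L x K, OF P0 P1 bound] by (simp_all add: s_sq c_def)
  then have K0: "0 \<le> K"
    by linarith
  have q_sq: "q\<^sup>2 = K\<^sup>2 - 4 * s\<^sup>2" and q0: "0 \<le> q"
    using K_ge by (simp_all add: q_def)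
  have qK: "q \<le> K"
    by (rule power2_le_imp_le) (use q_sq K0 in simp_all)
  have dev_sq: "(L x i - c)\<^sup>2 \<le> K\<^sup>2" for i
  proof -
    have "\<bar>L x i - c\<bar> \<le> K"
      using cK bound[of i] by (auto simp: abs_le_iff)
    from power_mono[OF this abs_ge_zero, of 2] show ?thesis
      by simp
  qed
  show ?thesis
  proof (rule prob_emp_ge_of_two_bernstein_controls[OF pos T a r_def,
        where f = "\<lambda>i. L x i - c" and bf = K and sf = s
          and g = "\<lambda>i. (L x i - c)\<^sup>2 - s\<^sup>2" and bg = "K\<^sup>2" and sg = "s * q"])
    show "(\<Sum>i\<in>UNIV. pmf P i * (L x i - c)) = 0" "(\<Sum>i\<in>UNIV. pmf P i * ((L x i - c)\<^sup>2 - s\<^sup>2)) = 0"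
      using P1 by (simp_all add: s_sq var_def c_def cost_def right_diff_distrib sum_subtractf
          sum_distrib_right[symmetric] mult.commute)
    show "L x i - c \<le> K" for i
      using cK bound[of i] by (auto simp: abs_le_iff)
    show "(L x i - c)\<^sup>2 - s\<^sup>2 \<le> K\<^sup>2" for i
      using dev_sq[of i] zero_le_power2[of s] by linarith
    show "(\<Sum>i\<in>UNIV. pmf P i * (L x i - c)\<^sup>2) \<le> s\<^sup>2"
      by (simp add: s_sq var_def c_def)
    show "(\<Sum>i\<in>UNIV. pmf P i * ((L x i - c)\<^sup>2 - s\<^sup>2)\<^sup>2) \<le> (s * q)\<^sup>2"
      using variance_of_squared_deviation_le[of "pmf P" L x K, OF P0 P1 bound]
      by (simp add: s_sq[symmetric] c_def[symmetric] power_mult_distrib q_sq power2_commute)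
    show "0 \<le> s * q"
      using s0 q0 by simp
    show "svp a L x Q T - sqrt (8 * a T / T * var L x (pmf P)) - 7 * K / 3 * (a T / T) \<le> cost L x (pmf P)"
      if "\<And>i. Q i \<ge> 0" "sum Q UNIV = 1"
        "(\<Sum>i\<in>UNIV. (L x i - c) * Q i) \<le> s * r + K * r\<^sup>2 / 6"
        "(\<Sum>i\<in>UNIV. ((L x i - c)\<^sup>2 - s\<^sup>2) * Q i) \<le> s * q * r + K\<^sup>2 * r\<^sup>2 / 6" for Q
      unfolding c_def[symmetric] s_sq[symmetric] using that a T
      by (intro svp_le_cost_of_controls[where a = a and T = T, OF _ K0 s0 qK r_def]) (simp_all add: r_def)
  qed (rule s0)
qed

lemma abs_le_SUP_Max_abs:
  fixes L :: "'a::topological_space \<Rightarrow> 's::finite \<Rightarrow> real"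
  assumes X: "compact X" and cont: "\<And>i. continuous_on X (\<lambda>y. L y i)" and x: "x \<in> X"
  shows "\<bar>L x i\<bar> \<le> (SUP y\<in>X. Max (range (\<lambda>i. \<bar>L y i\<bar>)))"
proof -
  have "bounded ((\<lambda>y. L y j) ` X)" for j
    by (intro compact_imp_bounded compact_continuous_image cont X)
  then obtain B where B: "\<And>j y. y \<in> X \<Longrightarrow> \<bar>L y j\<bar> \<le> B j"
    unfolding bounded_iff by (metis image_eqI real_norm_def)
  have "Max (range (\<lambda>i. \<bar>L y i\<bar>)) \<le> (\<Sum>j\<in>UNIV. \<bar>B j\<bar>)" if "y \<in> X" for y
  proof -
    have "\<bar>L y i\<bar> \<le> (\<Sum>j\<in>UNIV. \<bar>B j\<bar>)" for i
      using B[OF that, of i] member_le_sum[of i UNIV "\<lambda>j. \<bar>B j\<bar>"] by simp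
    then show ?thesis
      by (simp add: Max_le_iff)
  qed
  then have "bdd_above ((\<lambda>y. Max (range (\<lambda>i. \<bar>L y i\<bar>))) ` X)"
    by (rule bdd_aboveI2)
  have "\<bar>L x i\<bar> \<le> Max (range (\<lambda>i. \<bar>L x i\<bar>))"
    by (rule Max_ge) auto
  also have "\<dots> \<le> (SUP y\<in>X. Max (range (\<lambda>i. \<bar>L y i\<bar>)))"
    by (rule cSUP_upper[OF x \<open>bdd_above _\<close>])
  finally show ?thesis .
qed

theorem mainTheorem9:
  fixes X :: "(real ^ 'n) set" and L :: "real ^ 'n \<Rightarrow> 's::finite \<Rightarrow> real"
    and x :: "real ^ 'n" and P :: "'s pmf" and a :: "nat \<Rightarrow> real" and T :: nat
  assumes "compact X"
    and "\<And>i. continuous_on X (\<lambda>y. L y i)"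
    and "\<And>T. a T > 0"
    and "x \<in> X"
    and "\<And>i. pmf P i > 0"
    and "T \<ge> 1"
  defines "K \<equiv> 2 * (SUP y\<in>X. Max (range (\<lambda>i. \<bar>L y i\<bar>)))"
  shows "(measure (Pinf P) {\<omega> \<in> space (Pinf P).
           cost L x (pmf P) \<le> svp a L x (emp T \<omega>) T + 7 * K / 3 * (a T / real T)}
           \<ge> 1 - 2 * exp (- a T)) \<and>
         (measure (Pinf P) {\<omega> \<in> space (Pinf P).
           cost L x (pmf P) \<ge> svp a L x (emp T \<omega>) T
             - sqrt (8 * a T / real T * var L x (pmf P)) - 7 * K / 3 * (a T / real T)}
           \<ge> 1 - 2 * exp (- a T))"
proof -
  have bound: "\<bar>L x i\<bar> \<le> K / 2" for i
    using abs_le_SUP_Max_abs[OF assms(1,2,4)] by (simp add: K_def)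
  show ?thesis
    using svp_upper_confidence[where a = a and T = T and L = L and x = x, OF assms(5,6) assms(3)[of T] bound]
      svp_lower_confidence[where a = a and T = T and L = L and x = x, OF assms(5,6) assms(3)[of T] bound]
    by blast
qed

end
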